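(* In the setting of the context, fix $n\in\{0,1,\dots,T/\tau-1\}$ and suppose the MTI-FA iterates satisfy $|y^n|\le C_0+1$ and $|\dot y^n|\le (C_0+1)/\varepsilon^2$. Let $\tilde y^n$ solve $\varepsilon^2\ddot{\tilde y}^n(s)+(\alpha+\varepsilon^{-2})\tilde y^n(s)+g(|\tilde y^n(s)|^2)\tilde y^n(s)=0$ for $s>0$, $\tilde y^n(0)=y^n$, $\dot{\tilde y}^n(0)=\dot y^n$, and set $\eta^n(s)=y(t_n+s)-\tilde y^n(s)$, $\dot\eta^n(s)=\dot y(t_n+s)-\dot{\tilde y}^n(s)$, $e^n=y(t_n)-y^n$, $\dot e^n=\dot y(t_n)-\dot y^n$. Then $$\mathcal E(\eta^n(\tau),\dot\eta^n(\tau))-\mathcal E(e^n,\dot e^n)\lesssim\tau\,\mathcal E(e^n,\dot e^n),\qquad 0\le\tau\le\tau_1,$$ where $\tau_1=(2C_0+4)^{-1}K_1^{-1}$ with $K_1=\|g\|_{L^\infty(0,(2C_0+4)^2)}$, and $\mathcal E(e,\dot e)=\varepsilon^2|\dot e|^2+(\alpha+\varepsilon^{-2})|e|^2$ for $e,\dot e\in\mathbb{C}$.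
   Context: Setting. Let $0<\varepsilon\le1$, $\alpha\ge0$, $\lambda\in\mathbb{R}$, $p\in\mathbb{N}_0=\{0,1,2,\dots\}$, $g(\rho)=\lambda\rho^p$ and $f(y)=g(|y|^2)y$ for $y\in\mathbb{C}$. Let $\phi_1,\phi_2\in\mathbb{C}$ (independent of $\varepsilon$) and let $y(t)\in\mathbb{C}$ solve $\varepsilon^2\ddot y+(\alpha+\varepsilon^{-2})y+f(y)=0$ for $t>0$, $y(0)=\phi_1$, $\dot y(0)=\phi_2/\varepsilon^2$. Let $T^*$ be the maximal existence time, fix $0<T<T^*$, and assume $y\in C^2(0,T)$ with $\|\frac{d^m}{dt^m}y\|_{L^\infty(0,T)}\lesssim\varepsilon^{-2m}$ for $m=0,1,2$. Set $C_0=\max\{\|y\|_{L^\infty(0,T)},\varepsilon^2\|\dot y\|_{L^\infty(0,T)},\varepsilon^4\|\ddot y\|_{L^\infty(0,T)}\}$. $A\lesssim B$ means $|A|\le CB$ for a generic constant $C>0$ independent of $\tau$ (or $n$) and $\varepsilon$. $\tau>0$ is the time step, $t_n=n\tau$, $\bar z$ denotes complex conjugation, $\omega=\sqrt{1+\varepsilon^2\alpha}/\varepsilon^2$. The iterates $(y^n,\dot y^n)$ are those of the scheme MTI-FA: For $k=0,\dots,p$ let $\langle p_1,p_2,p_3\rangle_k$ be the set of $(p_1,p_2,p_3)\in\mathbb{N}_0^3$ with $p_1+2p_2+p_3=p-k$, $p_3\in\{0,1\}$; $g_\pm(\rho_+,\rho_-)=\sum_{\langle p_1,p_2,p_3\rangle_0}\lambda(\rho_++\rho_-)^{p_1}(\rho_+\rho_-)^{p_2}(\rho_\mp)^{p_3}$;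 for $k=1,\dots,p$, $g_k(z_+,z_-)=\lambda z_+^{k+1}z_-^{k}\sum_{\langle p_1,p_2,p_3\rangle_k}(|z_+|^2+|z_-|^2)^{p_1}|z_+|^{2p_2}|z_-|^{2p_2+2p_3}$, $P_k=\int_0^\tau\frac{\sin(\omega(\tau-\theta))}{\varepsilon^2\omega}e^{i(2k+1)\theta/\varepsilon^2}d\theta$, $Q_k=\int_0^\tau\frac{\sin(\omega(\tau-\theta))}{\varepsilon^2\omega}e^{i(2k+1)\theta/\varepsilon^2}\theta\,d\theta$, $\dot P_k=\int_0^\tau\frac{\cos(\omega(\tau-\theta))}{\varepsilon^2}e^{i(2k+1)\theta/\varepsilon^2}d\theta$, $\dot Q_k=\int_0^\tau\frac{\cos(\omega(\tau-\theta))}{\varepsilon^2}e^{i(2k+1)\theta/\varepsilon^2}\theta\,d\theta$ (empty sums if $p=0$). Set $y^0=\phi_1$, $\dot y^0=\phi_2/\varepsilon^2$; given $(y^n,\dot y^n)$ let $z_+^{(0)}=\frac{y^n-i\varepsilon^2\dot y^n}{2}$, $z_-^{(0)}=\frac{\overline{y^n}-i\varepsilon^2\overline{\dot y^n}}{2}$, $\mu_\pm=\frac12g_\pm(|z_+^{(0)}|^2,|z_-^{(0)}|^2)+\frac\alpha2$, $\dot z_\pm^{(0)}=i\mu_\pm z_\pm^{(0)}$, $\dot r^{(0)}=-\dot z_+^{(0)}-\overline{\dot z_-^{(0)}}$, $u^{(0)}=-\mu_+^2z_+^{(0)}-\mu_-^2\overline{z_-^{(0)}}$, $g_{k,\pm}^{(0)}=g_k(z_\pm^{(0)},z_\mp^{(0)})$,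 $\dot g_{k,\pm}^{(0)}=\frac{d}{ds}g_k(Z_\pm(s),Z_\mp(s))|_{s=0}$ with $Z_\pm(s)=e^{i\mu_\pm s}z_\pm^{(0)}$; $z_\pm^{n+1}=e^{i\mu_\pm\tau}z_\pm^{(0)}$, $\dot z_\pm^{n+1}=i\mu_\pm z_\pm^{n+1}$, $\ddot z_\pm^{n+1}=-\mu_\pm^2z_\pm^{n+1}$, $r^{n+1}=\frac{\sin(\omega\tau)}{\omega}(\dot r^{(0)}-\frac\tau2u^{(0)})-\sum_{k=1}^p[P_kg_{k,+}^{(0)}+Q_k\dot g_{k,+}^{(0)}+\overline{P_kg_{k,-}^{(0)}}+\overline{Q_k\dot g_{k,-}^{(0)}}]$, $y^{n+1}=e^{i\tau/\varepsilon^2}z_+^{n+1}+e^{-i\tau/\varepsilon^2}\overline{z_-^{n+1}}+r^{n+1}$, $u^{n+1}=e^{i\tau/\varepsilon^2}\ddot z_+^{n+1}+e^{-i\tau/\varepsilon^2}\overline{\ddot z_-^{n+1}}$, $h^{n+1}=g(|y^{n+1}|^2)y^{n+1}-g(|y^{n+1}-r^{n+1}|^2)(y^{n+1}-r^{n+1})$, $\dot r^{n+1}=-\sum_{k=1}^p[\dot P_kg_{k,+}^{(0)}+\dot Q_k\dot g_{k,+}^{(0)}+\overline{\dot P_kg_{k,-}^{(0)}}+\overline{\dot Q_k\dot g_{k,-}^{(0)}}]+\cos(\omega\tau)(\dot r^{(0)}-\frac\tau2u^{(0)})-\frac\tau2(\frac{h^{n+1}}{\varepsilon^2}+u^{n+1})$,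 $\dot y^{n+1}=e^{i\tau/\varepsilon^2}(\dot z_+^{n+1}+\frac{i}{\varepsilon^2}z_+^{n+1})+e^{-i\tau/\varepsilon^2}(\overline{\dot z_-^{n+1}}-\frac{i}{\varepsilon^2}\overline{z_-^{n+1}})+\dot r^{n+1}$. *)

theory Defs
  imports "HOL-Analysis.Analysis"
begin

definition gnl :: "real \<Rightarrow> nat \<Rightarrow> real \<Rightarrow> real" where
  "gnl lam p \<rho> = lam * \<rho> ^ p"

definition fnl :: "real \<Rightarrow> nat \<Rightarrow> complex \<Rightarrow> complex" where
  "fnl lam p z = complex_of_real (gnl lam p ((cmod z)\<^sup>2)) * z"

definition idx :: "nat \<Rightarrow> nat \<Rightarrow> (nat \<times> nat \<times> nat) set" where
  "idx p k = {(p1, p2, p3). p1 + 2 * p2 + p3 = p - k \<and> p3 \<in> {0, 1}}"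

text \<open>g_+ (sel = True) and g_- (sel = False).\<close>
definition gpm :: "bool \<Rightarrow> real \<Rightarrow> nat \<Rightarrow> real \<Rightarrow> real \<Rightarrow> real" where
  "gpm sel lam p rp rm =
     (\<Sum>(p1, p2, p3)\<in>idx p 0. lam * (rp + rm) ^ p1 * (rp * rm) ^ p2 * (if sel then rm else rp) ^ p3)"

definition gk :: "real \<Rightarrow> nat \<Rightarrow> nat \<Rightarrow> complex \<Rightarrow> complex \<Rightarrow> complex" where
  "gk lam p k zp zm =
     complex_of_real lam * zp ^ (k + 1) * zm ^ k *
     (\<Sum>(p1, p2, p3)\<in>idx p k.
        complex_of_real (((cmod zp)\<^sup>2 + (cmod zm)\<^sup>2) ^ p1 * cmod zp ^ (2 * p2) * cmod zm ^ (2 * p2 + 2 * p3)))"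

definition omg :: "real \<Rightarrow> real \<Rightarrow> real" where
  "omg eps \<alpha> = sqrt (1 + eps\<^sup>2 * \<alpha>) / eps\<^sup>2"

definition eix :: "real \<Rightarrow> complex" where
  "eix x = exp (\<i> * complex_of_real x)"

definition Pk :: "real \<Rightarrow> real \<Rightarrow> real \<Rightarrow> nat \<Rightarrow> complex" where
  "Pk eps \<alpha> \<tau> k = integral {0..\<tau>} (\<lambda>\<theta>.
     complex_of_real (sin (omg eps \<alpha> * (\<tau> - \<theta>)) / (eps\<^sup>2 * omg eps \<alpha>)) * eix ((2 * real k + 1) * \<theta> / eps\<^sup>2))"

definition Qk :: "real \<Rightarrow> real \<Rightarrow> real \<Rightarrow> nat \<Rightarrow> complex" where
  "Qk eps \<alpha> \<tau> k = integral {0..\<tau>} (\<lambda>\<theta>.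
     complex_of_real (sin (omg eps \<alpha> * (\<tau> - \<theta>)) / (eps\<^sup>2 * omg eps \<alpha>)) * eix ((2 * real k + 1) * \<theta> / eps\<^sup>2)
     * complex_of_real \<theta>)"

definition dPk :: "real \<Rightarrow> real \<Rightarrow> real \<Rightarrow> nat \<Rightarrow> complex" where
  "dPk eps \<alpha> \<tau> k = integral {0..\<tau>} (\<lambda>\<theta>.
     complex_of_real (cos (omg eps \<alpha> * (\<tau> - \<theta>)) / eps\<^sup>2) * eix ((2 * real k + 1) * \<theta> / eps\<^sup>2))"

definition dQk :: "real \<Rightarrow> real \<Rightarrow> real \<Rightarrow> nat \<Rightarrow> complex" where
  "dQk eps \<alpha> \<tau> k = integral {0..\<tau>} (\<lambda>\<theta>.
     complex_of_real (cos (omg eps \<alpha> * (\<tau> - \<theta>)) / eps\<^sup>2) * eix ((2 * real k + 1) * \<theta> / eps\<^sup>2)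
     * complex_of_real \<theta>)"

definition mti_step :: "real \<Rightarrow> real \<Rightarrow> real \<Rightarrow> nat \<Rightarrow> real \<Rightarrow> complex \<times> complex \<Rightarrow> complex \<times> complex" where
  "mti_step eps \<alpha> lam p \<tau> yy = (
     let yn = fst yy; ydn = snd yy;
         \<omega> = omg eps \<alpha>;
         e2 = complex_of_real (eps\<^sup>2);
         zp0 = (yn - \<i> * e2 * ydn) / 2;
         zm0 = (cnj yn - \<i> * e2 * cnj ydn) / 2;
         mup = gpm True lam p ((cmod zp0)\<^sup>2) ((cmod zm0)\<^sup>2) / 2 + \<alpha> / 2;
         mum = gpm False lam p ((cmod zp0)\<^sup>2) ((cmod zm0)\<^sup>2) / 2 + \<alpha> / 2;
         dzp0 = \<i> * complex_of_real mup * zp0;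
         dzm0 = \<i> * complex_of_real mum * zm0;
         dr0 = - dzp0 - cnj dzm0;
         u0 = - complex_of_real (mup\<^sup>2) * zp0 - complex_of_real (mum\<^sup>2) * cnj zm0;
         gp = (\<lambda>k. gk lam p k zp0 zm0);
         gm = (\<lambda>k. gk lam p k zm0 zp0);
         dgp = (\<lambda>k. vector_derivative (\<lambda>s. gk lam p k (eix (mup * s) * zp0) (eix (mum * s) * zm0)) (at 0));
         dgm = (\<lambda>k. vector_derivative (\<lambda>s. gk lam p k (eix (mum * s) * zm0) (eix (mup * s) * zp0)) (at 0));
         zp1 = eix (mup * \<tau>) * zp0;
         zm1 = eix (mum * \<tau>) * zm0;
         dzp1 = \<i> * complex_of_real mup * zp1;
         dzm1 = \<i> * complex_of_real mum * zm1;
         ddzp1 = - complex_of_real (mup\<^sup>2) * zp1;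
         ddzm1 = - complex_of_real (mum\<^sup>2) * zm1;
         w = dr0 - complex_of_real (\<tau> / 2) * u0;
         r1 = complex_of_real (sin (\<omega> * \<tau>) / \<omega>) * w
              - (\<Sum>k=1..p. Pk eps \<alpha> \<tau> k * gp k + Qk eps \<alpha> \<tau> k * dgp k
                            + cnj (Pk eps \<alpha> \<tau> k * gm k) + cnj (Qk eps \<alpha> \<tau> k * dgm k));
         y1 = eix (\<tau> / eps\<^sup>2) * zp1 + eix (- \<tau> / eps\<^sup>2) * cnj zm1 + r1;
         u1 = eix (\<tau> / eps\<^sup>2) * ddzp1 + eix (- \<tau> / eps\<^sup>2) * cnj ddzm1;
         h1 = fnl lam p y1 - fnl lam p (y1 - r1);
         dr1 = - (\<Sum>k=1..p. dPk eps \<alpha> \<tau> k * gp k + dQk eps \<alpha> \<tau> k * dgp k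
                            + cnj (dPk eps \<alpha> \<tau> k * gm k) + cnj (dQk eps \<alpha> \<tau> k * dgm k))
               + complex_of_real (cos (\<omega> * \<tau>)) * w
               - complex_of_real (\<tau> / 2) * (h1 / e2 + u1);
         dy1 = eix (\<tau> / eps\<^sup>2) * (dzp1 + \<i> / e2 * zp1)
               + eix (- \<tau> / eps\<^sup>2) * (cnj dzm1 - \<i> / e2 * cnj zm1) + dr1
     in (y1, dy1))"

definition mti :: "real \<Rightarrow> real \<Rightarrow> real \<Rightarrow> nat \<Rightarrow> real \<Rightarrow> complex \<Rightarrow> complex \<Rightarrow> nat \<Rightarrow> complex \<times> complex" where
  "mti eps \<alpha> lam p \<tau> \<phi>1 \<phi>2 n = (mti_step eps \<alpha> lam p \<tau> ^^ n) (\<phi>1, \<phi>2 / complex_of_real (eps\<^sup>2))"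

definition energy :: "real \<Rightarrow> real \<Rightarrow> complex \<Rightarrow> complex \<Rightarrow> real" where
  "energy eps \<alpha> e de = eps\<^sup>2 * (cmod de)\<^sup>2 + (\<alpha> + 1 / eps\<^sup>2) * (cmod e)\<^sup>2"

definition solves_on :: "real \<Rightarrow> real \<Rightarrow> real \<Rightarrow> nat \<Rightarrow> real \<Rightarrow>
    (real \<Rightarrow> complex) \<Rightarrow> (real \<Rightarrow> complex) \<Rightarrow> (real \<Rightarrow> complex) \<Rightarrow> bool" where
  "solves_on eps \<alpha> lam p S z dz ddz \<longleftrightarrow>
     (\<forall>t\<in>{0..S}. (z has_vector_derivative dz t) (at t within {0..S})
              \<and> (dz has_vector_derivative ddz t) (at t within {0..S})
              \<and> complex_of_real (eps\<^sup>2) * ddz t + complex_of_real (\<alpha> + 1 / eps\<^sup>2) * z t + fnl lam p (z t) = 0)"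

end

theory Submission
  imports Defs
begin

text \<open>
  The error \<open>\<eta>\<close> is the difference of two solutions of the same equation, one through
  \<open>(y(t\<^sub>n), y'(t\<^sub>n))\<close> and one through the iterate. Its energy \<open>E\<close> satisfies
  \<open>E' = -2 \<langle>\<eta>', f(y) - f(\<tilde>y)\<rangle>\<close>, and if \<open>f\<close> is \<open>L\<close>-Lipschitz on a ball containing both
  solutions then \<open>2 |\<eta>'| L |\<eta>| \<le> L (\<epsilon>\<^sup>2 |\<eta>'|\<^sup>2 + \<epsilon>\<^sup>-\<^sup>2 |\<eta>|\<^sup>2) \<le> L E\<close>, with no loss in \<open>\<epsilon>\<close>.
  Gronwall in both directions gives \<open>e\<^sup>-\<^sup>L\<^sup>\<tau> E(0) \<le> E(\<tau>) \<le> e\<^sup>L\<^sup>\<tau> E(0)\<close>, hence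
  \<open>|E(\<tau>) - E(0)| \<le> L \<tau> e\<^sup>L\<^sup>\<tau> E(0)\<close>.
  The exact solution stays in the ball of radius \<open>C\<^sub>0 \<le> M\<close>; the local solution \<open>\<tilde>y\<close> stays in
  the ball of radius \<open>2C\<^sub>0 + 4\<close> up to time \<open>\<tau>\<^sub>1\<close> by a continuity argument, so \<open>L\<close> can be taken
  uniform in \<open>\<epsilon>\<close>. Nothing about the MTI-FA scheme is used beyond the assumed bounds on the iterate.
\<close>

section \<open>Real analysis\<close>

lemma norm_power_diff_le:
  fixes z w :: "'a::real_normed_field"
  assumes z: "norm z \<le> R" and w: "norm w \<le> R"
  shows "norm (z ^ n - w ^ n) \<le> real n * R ^ (n - 1) * norm (z - w)"
proof (cases "R = 0")
  case True
  then show ?thesis using z w by simp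
next
  case False
  moreover have "0 \<le> R" using norm_ge_zero z by (rule order.trans)
  ultimately have R: "R > 0" by simp
  define a b where "a = z / of_real R" and "b = w / of_real R"
  have "norm a \<le> 1" "norm b \<le> 1"
    using z w R by (simp_all add: a_def b_def norm_divide)
  then have ab: "norm (a ^ n - b ^ n) \<le> real n * norm (a - b)"
    by (rule norm_power_diff)
  have "z ^ n - w ^ n = of_real (R ^ n) * (a ^ n - b ^ n)"
    using R by (simp add: a_def b_def power_divide right_diff_distrib)
  then have "norm (z ^ n - w ^ n) = R ^ n * norm (a ^ n - b ^ n)"
    using R by (simp add: norm_mult norm_power)
  also have "\<dots> \<le> R ^ n * (real n * norm (a - b))"
    using ab R by (simp add: mult_left_mono)
  also have "norm (a - b) = norm (z - w) / R"
    using R by (simp add: a_def b_def diff_divide_distrib[symmetric] norm_divide)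
  also have "R ^ n * (real n * (norm (z - w) / R)) = real n * R ^ (n - 1) * norm (z - w)"
    using R by (cases n) simp_all
  finally show ?thesis .
qed

lemma has_real_derivative_norm_squared:
  fixes w :: "real \<Rightarrow> 'a::real_inner"
  assumes "(w has_vector_derivative w') (at x within S)"
  shows "((\<lambda>s. (norm (w s))\<^sup>2) has_real_derivative 2 * inner (w x) w') (at x within S)"
proof -
  have "((\<lambda>s. inner (w s) (w s)) has_derivative (\<lambda>h. inner (w x) (h *\<^sub>R w') + inner (h *\<^sub>R w') (w x)))
      (at x within S)"
    using has_derivative_inner[OF assms[unfolded has_vector_derivative_def]
        assms[unfolded has_vector_derivative_def]] .
  then have "((\<lambda>s. inner (w s) (w s)) has_derivative (\<lambda>h. (2 * inner (w x) w') * h)) (at x within S)"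
    by (rule has_derivative_eq_rhs) (auto simp: inner_commute algebra_simps)
  then show ?thesis
    by (simp add: has_field_derivative_def power2_norm_eq_inner)
qed

lemma gronwall_two_sided:
  fixes \<phi> \<phi>' :: "real \<Rightarrow> real"
  assumes S: "0 \<le> S" and L: "0 \<le> L"
    and deriv: "\<And>s. s \<in> {0..S} \<Longrightarrow> (\<phi> has_real_derivative \<phi>' s) (at s within {0..S})"
    and bound: "\<And>s. s \<in> {0..S} \<Longrightarrow> \<bar>\<phi>' s\<bar> \<le> L * \<phi> s"
  shows "\<phi> S \<le> exp (L * S) * \<phi> 0" and "exp (- (L * S)) * \<phi> 0 \<le> \<phi> S"
proof -
  define \<psi> where "\<psi> c s = exp (c * s) * \<phi> s" for c s
  have \<psi>_deriv: "(\<psi> c has_real_derivative exp (c * s) * (\<phi>' s + c * \<phi> s)) (at s)"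
    if "0 < s" "s < S" for c s
  proof -
    have "(\<psi> c has_real_derivative exp (c * s) * (\<phi>' s + c * \<phi> s)) (at s within {0..S})"
      unfolding \<psi>_def using that
      by (auto intro!: derivative_eq_intros deriv simp: algebra_simps)
    then show ?thesis using that by (simp add: at_within_Icc_at)
  qed
  have \<psi>_cont: "continuous_on {0..S} (\<psi> c)" for c
    unfolding \<psi>_def by (intro continuous_intros DERIV_continuous_on[OF deriv]) auto
  have "\<psi> (- L) S \<le> \<psi> (- L) 0"
  proof (rule DERIV_nonpos_imp_decreasing_open[OF S _ \<psi>_cont])
    fix s assume "0 < s" "s < S"
    moreover have "exp (- L * s) * (\<phi>' s + - L * \<phi> s) \<le> 0"
      using bound[of s] \<open>0 < s\<close> \<open>s < S\<close> by (intro mult_nonneg_nonpos) auto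
    ultimately show "\<exists>y. (\<psi> (- L) has_real_derivative y) (at s) \<and> y \<le> 0"
      using \<psi>_deriv by blast
  qed
  then show "\<phi> S \<le> exp (L * S) * \<phi> 0"
    by (simp add: \<psi>_def exp_minus field_simps)
  have "\<psi> L 0 \<le> \<psi> L S"
  proof (rule DERIV_nonneg_imp_increasing_open[OF S _ \<psi>_cont])
    fix s assume "0 < s" "s < S"
    moreover have "0 \<le> exp (L * s) * (\<phi>' s + L * \<phi> s)"
      using bound[of s] \<open>0 < s\<close> \<open>s < S\<close> by (intro mult_nonneg_nonneg) auto
    ultimately show "\<exists>y. (\<psi> L has_real_derivative y) (at s) \<and> 0 \<le> y"
      using \<psi>_deriv by blast
  qed
  then show "exp (- (L * S)) * \<phi> 0 \<le> \<phi> S"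
    by (simp add: \<psi>_def exp_minus field_simps)
qed

lemma abs_diff_le_of_exp_bounds:
  fixes E0 E1 x :: real
  assumes "0 \<le> E0" "0 \<le> x" and up: "E1 \<le> exp x * E0" and low: "exp (- x) * E0 \<le> E1"
  shows "\<bar>E1 - E0\<bar> \<le> x * exp x * E0"
proof -
  have "exp x - 1 \<le> x * exp x"
    using exp_ge_add_one_self[of "- x"] mult_right_mono[of "1 - x" "exp (- x)" "exp x"]
    by (simp add: exp_minus algebra_simps)
  then have "E1 - E0 \<le> x * exp x * E0"
    using up \<open>0 \<le> E0\<close> mult_right_mono[of "exp x - 1" "x * exp x" E0] by (simp add: algebra_simps)
  moreover have "1 - exp (- x) \<le> x * exp x"
    using exp_ge_add_one_self[of "- x"] \<open>0 \<le> x\<close> mult_left_mono[of 1 "exp x" x] by simp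
  then have "E0 - E1 \<le> x * exp x * E0"
    using low \<open>0 \<le> E0\<close> mult_right_mono[of "1 - exp (- x)" "x * exp x" E0] by (simp add: algebra_simps)
  ultimately show ?thesis by linarith
qed

lemma continuous_on_first_reach:
  fixes f :: "real \<Rightarrow> real"
  assumes cont: "continuous_on {0..\<tau>} f" and f0: "f 0 < R"
    and s0: "s0 \<in> {0..\<tau>}" "R \<le> f s0"
  obtains s1 where "s1 \<in> {0..\<tau>}" "R \<le> f s1" "\<And>r. r \<in> {0..s1} \<Longrightarrow> f r \<le> R"
proof -
  define A where "A = {0..\<tau>} \<inter> f -` {R..}"
  have "A \<noteq> {}" using s0 by (auto simp: A_def)
  moreover have bdd: "bdd_below A" unfolding A_def by (rule bdd_belowI[of _ 0]) auto
  moreover have "closed A" unfolding A_def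
    by (intro continuous_closed_preimage cont) auto
  ultimately have "Inf A \<in> A" by (rule closed_contains_Inf)
  then have s1: "Inf A \<in> {0..\<tau>}" "R \<le> f (Inf A)" by (auto simp: A_def)
  have below: "f r < R" if "0 \<le> r" "r < Inf A" for r
  proof (rule ccontr)
    assume "\<not> f r < R"
    then have "r \<in> A" using that s1 by (auto simp: A_def)
    then show False using cInf_lower[OF _ bdd] that by fastforce
  qed
  have "0 < Inf A"
    using f0 s1 by (metis atLeastAtMost_iff linorder_not_le order.order_iff_strict)
  then have "{0..Inf A} = closure {0..<Inf A}" by simp
  also have "\<dots> \<subseteq> {0..Inf A} \<inter> f -` {..R}"
    using s1 by (intro closure_minimal continuous_closed_preimage continuous_on_subset[OF cont])
      (auto intro!: less_imp_le[OF below])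
  finally show ?thesis using that s1 by blast
qed

lemma le_SUP_continuous_on_Icc:
  fixes f :: "real \<Rightarrow> real"
  assumes "continuous_on {a..b} f" "x \<in> {a..b}"
  shows "f x \<le> (SUP x\<in>{a..b}. f x)"
proof (rule cSUP_upper[OF assms(2)])
  have "compact (f ` {a..b})" by (rule compact_continuous_image[OF assms(1) compact_Icc])
  then show "bdd_above (f ` {a..b})" by (intro bounded_imp_bdd_above compact_imp_bounded)
qed

section \<open>The nonlinearity, the energy and the equation\<close>

lemma norm_fnl_le: "\<bar>gnl lam p ((cmod z)\<^sup>2)\<bar> \<le> K \<Longrightarrow> cmod (fnl lam p z) \<le> K * cmod z"
  unfolding fnl_def by (simp add: norm_mult mult_right_mono)

lemma norm_fnl_diff_le:
  assumes "cmod a \<le> R" "cmod b \<le> R"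
  shows "cmod (fnl lam p a - fnl lam p b) \<le> \<bar>lam\<bar> * (2 * real p + 1) * R ^ (2 * p) * cmod (a - b)"
proof -
  have R: "0 \<le> R" using assms(1) norm_ge_zero order.trans by blast
  define d where "d = cmod a ^ (2 * p) - cmod b ^ (2 * p)"
  have "fnl lam p a - fnl lam p b = of_real lam * (of_real (cmod a ^ (2 * p)) * (a - b) + of_real d * b)"
    unfolding fnl_def gnl_def d_def by (simp add: power_mult[symmetric] algebra_simps)
  also have "cmod \<dots> \<le> \<bar>lam\<bar> * (cmod (of_real (cmod a ^ (2 * p)) * (a - b)) + cmod (of_real d * b))"
    by (subst norm_mult) (simp add: mult_left_mono norm_triangle_ineq)
  also have "\<dots> = \<bar>lam\<bar> * (cmod a ^ (2 * p) * cmod (a - b) + \<bar>d\<bar> * cmod b)"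
    by (simp add: norm_mult norm_power)
  also have "\<dots> \<le> \<bar>lam\<bar> * (R ^ (2 * p) * cmod (a - b) + real (2 * p) * R ^ (2 * p - 1) * cmod (a - b) * R)"
  proof -
    have "\<bar>d\<bar> \<le> real (2 * p) * R ^ (2 * p - 1) * \<bar>cmod a - cmod b\<bar>"
      unfolding d_def using norm_power_diff_le[of "cmod a" R "cmod b" "2 * p"] assms by simp
    also have "\<dots> \<le> real (2 * p) * R ^ (2 * p - 1) * cmod (a - b)"
      using R by (intro mult_left_mono norm_triangle_ineq3) auto
    finally have "\<bar>d\<bar> * cmod b \<le> real (2 * p) * R ^ (2 * p - 1) * cmod (a - b) * R"
      using assms(2) R by (intro mult_mono) auto
    moreover have "cmod a ^ (2 * p) * cmod (a - b) \<le> R ^ (2 * p) * cmod (a - b)"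
      using assms(1) by (intro mult_right_mono power_mono) auto
    ultimately show ?thesis by (simp add: add_mono mult_left_mono)
  qed
  also have "real (2 * p) * R ^ (2 * p - 1) * cmod (a - b) * R = 2 * real p * R ^ (2 * p) * cmod (a - b)"
    by (cases p) (simp_all add: algebra_simps)
  also have "\<bar>lam\<bar> * (R ^ (2 * p) * cmod (a - b) + 2 * real p * R ^ (2 * p) * cmod (a - b))
      = \<bar>lam\<bar> * (2 * real p + 1) * R ^ (2 * p) * cmod (a - b)"
    by (simp add: algebra_simps)
  finally show ?thesis .
qed

lemma energy_nonneg: "\<alpha> \<ge> 0 \<Longrightarrow> 0 \<le> energy eps \<alpha> e de"
  unfolding energy_def by simp

lemma norm_squared_le_energy: "\<alpha> \<ge> 0 \<Longrightarrow> (\<alpha> + 1 / eps\<^sup>2) * (cmod e)\<^sup>2 \<le> energy eps \<alpha> e de"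
  unfolding energy_def by simp

lemma energy_le_of_norm_le:
  assumes "eps > 0" "\<alpha> \<ge> 0" "cmod e \<le> a" "cmod de \<le> a / eps\<^sup>2"
  shows "energy eps \<alpha> e de \<le> 2 * (\<alpha> + 1 / eps\<^sup>2) * a\<^sup>2"
proof -
  have "eps\<^sup>2 * (cmod de)\<^sup>2 \<le> eps\<^sup>2 * (a / eps\<^sup>2)\<^sup>2"
    using assms by (intro mult_left_mono power_mono) auto
  also have "\<dots> = (1 / eps\<^sup>2) * a\<^sup>2"
    using assms by (simp add: power2_eq_square)
  also have "\<dots> \<le> (\<alpha> + 1 / eps\<^sup>2) * a\<^sup>2"
    using assms by (intro mult_right_mono) auto
  finally have "eps\<^sup>2 * (cmod de)\<^sup>2 \<le> (\<alpha> + 1 / eps\<^sup>2) * a\<^sup>2" .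
  moreover have "(\<alpha> + 1 / eps\<^sup>2) * (cmod e)\<^sup>2 \<le> (\<alpha> + 1 / eps\<^sup>2) * a\<^sup>2"
    using assms by (intro mult_left_mono power_mono) auto
  ultimately show ?thesis unfolding energy_def by linarith
qed

lemma solves_on_zero: "solves_on eps \<alpha> lam p S (\<lambda>_. 0) (\<lambda>_. 0) (\<lambda>_. 0)"
  unfolding solves_on_def fnl_def by auto

lemma solves_on_mono:
  assumes "solves_on eps \<alpha> lam p S z dz ddz" "S' \<le> S"
  shows "solves_on eps \<alpha> lam p S' z dz ddz"
  using assms unfolding solves_on_def
  by (meson atLeastAtMost_iff atLeastatMost_subset_iff has_vector_derivative_within_subset order.refl order_trans)

lemma solves_on_shift:
  assumes sol: "solves_on eps \<alpha> lam p T z dz ddz" and "0 \<le> a" "a + S \<le> T"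
  shows "solves_on eps \<alpha> lam p S (\<lambda>s. z (a + s)) (\<lambda>s. dz (a + s)) (\<lambda>s. ddz (a + s))"
  unfolding solves_on_def
proof
  fix s assume s: "s \<in> {0..S}"
  have shift: "(\<lambda>s. a + s) ` {0..S} \<subseteq> {0..T}" using assms by auto
  have "((\<lambda>s. a + s) has_vector_derivative 1) (at s within {0..S})"
    by (auto intro!: derivative_eq_intros)
  from vector_diff_chain_within[OF this has_vector_derivative_within_subset[OF _ shift]]
  have chain: "((\<lambda>s. g (a + s)) has_vector_derivative g') (at s within {0..S})"
    if "(g has_vector_derivative g') (at (a + s) within {0..T})" for g :: "real \<Rightarrow> complex" and g'
    using that by (simp add: o_def)
  have "a + s \<in> {0..T}" using s assms by auto
  then show "((\<lambda>s. z (a + s)) has_vector_derivative dz (a + s)) (at s within {0..S}) \<and>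
      ((\<lambda>s. dz (a + s)) has_vector_derivative ddz (a + s)) (at s within {0..S}) \<and>
      complex_of_real (eps\<^sup>2) * ddz (a + s) + complex_of_real (\<alpha> + 1 / eps\<^sup>2) * z (a + s)
        + fnl lam p (z (a + s)) = 0"
    using sol chain[of z] chain[of dz] unfolding solves_on_def by auto
qed

section \<open>Energy estimates\<close>

lemma solves_on_energy_diff_deriv:
  assumes u: "solves_on eps \<alpha> lam p S u du ddu" and v: "solves_on eps \<alpha> lam p S v dv ddv"
    and s: "s \<in> {0..S}"
  shows "((\<lambda>s. energy eps \<alpha> (u s - v s) (du s - dv s)) has_real_derivative
      - 2 * inner (du s - dv s) (fnl lam p (u s) - fnl lam p (v s))) (at s within {0..S})"
proof -
  define c where "c = \<alpha> + 1 / eps\<^sup>2"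
  define w dw ddw D where "w = u s - v s" and "dw = du s - dv s" and "ddw = ddu s - ddv s"
    and "D = fnl lam p (u s) - fnl lam p (v s)"
  have "((\<lambda>s. u s - v s) has_vector_derivative dw) (at s within {0..S})"
    and "((\<lambda>s. du s - dv s) has_vector_derivative ddw) (at s within {0..S})"
    using u v s unfolding solves_on_def dw_def ddw_def by (auto intro: has_vector_derivative_diff)
  from this[THEN has_real_derivative_norm_squared]
  have deriv: "((\<lambda>s. energy eps \<alpha> (u s - v s) (du s - dv s)) has_real_derivative
      eps\<^sup>2 * (2 * inner dw ddw) + c * (2 * inner w dw)) (at s within {0..S})"
    unfolding energy_def c_def[symmetric] w_def dw_def by (intro DERIV_add DERIV_cmult)
  have "eps\<^sup>2 *\<^sub>R ddw = - (c *\<^sub>R w) - D"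
  proof -
    have "of_real (eps\<^sup>2) * ddu s + of_real c * u s + fnl lam p (u s) = 0"
      and "of_real (eps\<^sup>2) * ddv s + of_real c * v s + fnl lam p (v s) = 0"
      using u v s unfolding solves_on_def c_def by auto
    moreover have "of_real (eps\<^sup>2) * ddw =
        (of_real (eps\<^sup>2) * ddu s + of_real c * u s + fnl lam p (u s))
        - (of_real (eps\<^sup>2) * ddv s + of_real c * v s + fnl lam p (v s))
        - of_real c * w - D"
      by (simp add: w_def ddw_def D_def algebra_simps)
    ultimately show ?thesis by (simp add: scaleR_conv_of_real)
  qed
  then have "eps\<^sup>2 * inner dw ddw = - c * inner dw w - inner dw D"
    by (metis inner_diff_right inner_minus_right inner_scaleR_right mult_minus_left)
  then have "eps\<^sup>2 * (2 * inner dw ddw) + c * (2 * inner w dw) = - 2 * inner dw D"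
    by (simp add: inner_commute algebra_simps)
  with deriv show ?thesis
    unfolding dw_def D_def by simp
qed

lemma abs_two_inner_le_energy:
  assumes "eps > 0" "\<alpha> \<ge> 0" "L \<ge> 0" and D: "cmod D \<le> L * cmod w"
  shows "\<bar>2 * inner dw D\<bar> \<le> L * energy eps \<alpha> w dw"
proof -
  have "\<bar>2 * inner dw D\<bar> \<le> 2 * (cmod dw * (L * cmod w))"
    using Cauchy_Schwarz_ineq2[of dw D] D by (simp add: abs_mult mult_left_mono order_trans)
  also have "\<dots> = L * (2 * (eps * cmod dw) * (cmod w / eps))"
    using assms by simp
  also have "\<dots> \<le> L * ((eps * cmod dw)\<^sup>2 + (cmod w / eps)\<^sup>2)"
    using assms sum_squares_bound[of "eps * cmod dw" "cmod w / eps"] by (intro mult_left_mono) auto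
  also have "\<dots> \<le> L * energy eps \<alpha> w dw"
    using assms unfolding energy_def
    by (intro mult_left_mono) (auto simp: power_divide power_mult_distrib field_simps)
  finally show ?thesis .
qed

lemma energy_gronwall:
  assumes "eps > 0" "\<alpha> \<ge> 0" "S \<ge> 0" "L \<ge> 0"
    and u: "solves_on eps \<alpha> lam p S u du ddu" and v: "solves_on eps \<alpha> lam p S v dv ddv"
    and lip: "\<And>s. s \<in> {0..S} \<Longrightarrow> cmod (fnl lam p (u s) - fnl lam p (v s)) \<le> L * cmod (u s - v s)"
  shows "energy eps \<alpha> (u S - v S) (du S - dv S) \<le> exp (L * S) * energy eps \<alpha> (u 0 - v 0) (du 0 - dv 0)"
    and "exp (- (L * S)) * energy eps \<alpha> (u 0 - v 0) (du 0 - dv 0) \<le> energy eps \<alpha> (u S - v S) (du S - dv S)"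
  using gronwall_two_sided[OF \<open>S \<ge> 0\<close> \<open>L \<ge> 0\<close> solves_on_energy_diff_deriv[OF u v]]
    abs_two_inner_le_energy[OF assms(1,2,4) lip]
  by auto

lemma solves_on_norm_le:
  assumes "eps > 0" "\<alpha> \<ge> 0" "B \<ge> 0"
    and sol: "solves_on eps \<alpha> lam p \<tau> yt ydt yddt"
    and init: "cmod (yt 0) \<le> B + 1" "cmod (ydt 0) \<le> (B + 1) / eps\<^sup>2"
    and gK: "\<And>\<rho>. \<rho> \<in> {0..(2 * B + 4)\<^sup>2} \<Longrightarrow> \<bar>gnl lam p \<rho>\<bar> \<le> K"
    and small: "\<tau> * (2 * B + 4) * K \<le> 1"
    and s: "s \<in> {0..\<tau>}"
  shows "cmod (yt s) \<le> 2 * B + 4"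
proof (rule ccontr)
  \<comment> \<open>Until \<open>|yt|\<close> first reaches \<open>2B + 3\<close> we have \<open>|f(yt)| \<le> K |yt|\<close>, so the energy of \<open>yt\<close>
    grows at most by the factor \<open>exp (K \<tau>) \<le> 3/2\<close>: too little to get from \<open>B + 1\<close> to \<open>2B + 3\<close>.\<close>
  define c where "c = \<alpha> + 1 / eps\<^sup>2"
  assume "\<not> cmod (yt s) \<le> 2 * B + 4"
  then have "2 * B + 3 \<le> cmod (yt s)" by simp
  moreover have "continuous_on {0..\<tau>} (\<lambda>s. cmod (yt s))"
    using sol unfolding solves_on_def by (intro continuous_on_norm continuous_on_vector_derivative) auto
  moreover have "cmod (yt 0) < 2 * B + 3" using init \<open>B \<ge> 0\<close> by simp
  ultimately obtain s1 where s1: "s1 \<in> {0..\<tau>}" "2 * B + 3 \<le> cmod (yt s1)"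
    and below: "\<And>r. r \<in> {0..s1} \<Longrightarrow> cmod (yt r) \<le> 2 * B + 3"
    using continuous_on_first_reach[OF _ _ s] by metis
  have K: "0 \<le> K" using gK[of 0] by (simp add: gnl_def)
  have "cmod (fnl lam p (yt r) - fnl lam p 0) \<le> K * cmod (yt r - 0)" if "r \<in> {0..s1}" for r
  proof -
    have "(cmod (yt r))\<^sup>2 \<le> (2 * B + 4)\<^sup>2"
      using below[OF that] by (intro power_mono) auto
    then have "cmod (fnl lam p (yt r)) \<le> K * cmod (yt r)"
      by (intro norm_fnl_le gK) auto
    then show ?thesis by (simp add: fnl_def)
  qed
  then have "energy eps \<alpha> (yt s1) (ydt s1) \<le> exp (K * s1) * energy eps \<alpha> (yt 0) (ydt 0)"
    using energy_gronwall(1)[OF assms(1,2) _ K solves_on_mono[OF sol] solves_on_zero] s1 by simp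
  with norm_squared_le_energy[OF \<open>\<alpha> \<ge> 0\<close>]
  have "c * (cmod (yt s1))\<^sup>2 \<le> exp (K * s1) * energy eps \<alpha> (yt 0) (ydt 0)"
    unfolding c_def by (rule order.trans)
  also have "\<dots> \<le> 3 / 2 * (2 * c * (B + 1)\<^sup>2)"
  proof (rule mult_mono)
    have "K * s1 \<le> K * \<tau>" using K s1 by (intro mult_left_mono) auto
    also have "\<dots> \<le> K * \<tau> * (2 * B + 4) / 4"
      using K s1 \<open>B \<ge> 0\<close> by (simp add: field_simps)
    also have "\<dots> \<le> 1 / 4" using small by (simp add: algebra_simps)
    finally have "K * s1 \<le> 1 / 4" .
    then show "exp (K * s1) \<le> 3 / 2"
      using exp_bound_lemma[of "K * s1"] K s1 by simp
    show "energy eps \<alpha> (yt 0) (ydt 0) \<le> 2 * c * (B + 1)\<^sup>2"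
      unfolding c_def using energy_le_of_norm_le[OF assms(1,2) init] .
  qed (use energy_nonneg assms in auto)
  finally have "c * (cmod (yt s1))\<^sup>2 \<le> c * (3 * (B + 1)\<^sup>2)" by simp
  moreover have "c > 0" using assms by (simp add: c_def add_nonneg_pos)
  ultimately have "(cmod (yt s1))\<^sup>2 \<le> 3 * (B + 1)\<^sup>2" by simp
  moreover have "(2 * B + 3)\<^sup>2 \<le> (cmod (yt s1))\<^sup>2"
    using s1 \<open>B \<ge> 0\<close> by (intro power_mono) auto
  moreover have "(2 * B + 3)\<^sup>2 - 3 * (B + 1)\<^sup>2 = B\<^sup>2 + 6 * B + 6"
    by (simp add: power2_eq_square algebra_simps)
  ultimately show False
    using \<open>B \<ge> 0\<close> zero_le_power2[of B] by linarith
qed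

lemma solves_on_energy_error_step:
  assumes "eps > 0" "\<alpha> \<ge> 0" "\<tau> \<ge> 0" "B \<ge> 0"
    and u: "solves_on eps \<alpha> lam p \<tau> u du ddu" and u_bound: "\<And>s. s \<in> {0..\<tau>} \<Longrightarrow> cmod (u s) \<le> B"
    and v: "solves_on eps \<alpha> lam p \<tau> v dv ddv"
    and v_init: "cmod (v 0) \<le> B + 1" "cmod (dv 0) \<le> (B + 1) / eps\<^sup>2"
    and gK: "\<And>\<rho>. \<rho> \<in> {0..(2 * B + 4)\<^sup>2} \<Longrightarrow> \<bar>gnl lam p \<rho>\<bar> \<le> K"
    and small: "\<tau> * (2 * B + 4) * K \<le> 1"
  defines "L \<equiv> \<bar>lam\<bar> * (2 * real p + 1) * (2 * B + 4) ^ (2 * p)"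
  shows "\<bar>energy eps \<alpha> (u \<tau> - v \<tau>) (du \<tau> - dv \<tau>) - energy eps \<alpha> (u 0 - v 0) (du 0 - dv 0)\<bar>
      \<le> L * \<tau> * exp (L * \<tau>) * energy eps \<alpha> (u 0 - v 0) (du 0 - dv 0)"
proof -
  have "cmod (fnl lam p (u s) - fnl lam p (v s)) \<le> L * cmod (u s - v s)" if "s \<in> {0..\<tau>}" for s
    unfolding L_def using u_bound[OF that] \<open>B \<ge> 0\<close>
      solves_on_norm_le[OF assms(1,2,4) v v_init gK small that]
    by (intro norm_fnl_diff_le) auto
  note G = energy_gronwall[OF assms(1-3) _ u v this]
  show ?thesis
    using abs_diff_le_of_exp_bounds[OF energy_nonneg[OF \<open>\<alpha> \<ge> 0\<close>] _ G] \<open>\<tau> \<ge> 0\<close>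
    by (simp add: L_def mult.assoc)
qed

lemma one_step_energy_estimate:
  fixes eps \<alpha> lam T M \<tau> :: real and p n :: nat and yn ydn :: complex
    and y yd ydd yt ydt yddt :: "real \<Rightarrow> complex"
  defines "C0 \<equiv> max (SUP t\<in>{0..T}. cmod (y t))
      (max (eps\<^sup>2 * (SUP t\<in>{0..T}. cmod (yd t))) (eps ^ 4 * (SUP t\<in>{0..T}. cmod (ydd t))))"
    and "Lm \<equiv> \<bar>lam\<bar> * (2 * real p + 1) * (2 * M + 4) ^ (2 * p)"
  assumes "\<alpha> \<ge> 0" "eps > 0"
    and sol: "solves_on eps \<alpha> lam p T y yd ydd"
    and bnd: "\<forall>t\<in>{0..T}. cmod (y t) \<le> M \<and> cmod (yd t) \<le> M / eps\<^sup>2 \<and> cmod (ydd t) \<le> M / eps ^ 4"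
    and "0 < \<tau>" and small: "\<tau> * (2 * C0 + 4) * (SUP \<rho>\<in>{0..(2 * C0 + 4)\<^sup>2}. \<bar>gnl lam p \<rho>\<bar>) \<le> 1"
    and n: "real n \<le> T / \<tau> - 1"
    and init: "cmod yn \<le> C0 + 1" "cmod ydn \<le> (C0 + 1) / eps\<^sup>2"
    and solt: "solves_on eps \<alpha> lam p \<tau> yt ydt yddt" "yt 0 = yn" "ydt 0 = ydn"
    and C: "Lm * exp (Lm * T) \<le> C"
  shows "\<bar>energy eps \<alpha> (y (real n * \<tau> + \<tau>) - yt \<tau>) (yd (real n * \<tau> + \<tau>) - ydt \<tau>)
      - energy eps \<alpha> (y (real n * \<tau>) - yn) (yd (real n * \<tau>) - ydn)\<bar>
    \<le> C * \<tau> * energy eps \<alpha> (y (real n * \<tau>) - yn) (yd (real n * \<tau>) - ydn)"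
proof -
  define tn where "tn = real n * \<tau>"
  have tn: "0 \<le> tn" "tn + \<tau> \<le> T"
    using n \<open>0 < \<tau>\<close> by (simp_all add: tn_def field_simps)
  have T0: "0 \<in> {0..T}" using tn \<open>0 < \<tau>\<close> by simp
  have y_C0: "cmod (y t) \<le> C0" if "t \<in> {0..T}" for t
  proof -
    have "bdd_above ((\<lambda>t. cmod (y t)) ` {0..T})" using bnd by (intro bdd_aboveI2[of _ _ M]) auto
    then have "cmod (y t) \<le> (SUP t\<in>{0..T}. cmod (y t))" by (rule cSUP_upper[OF that])
    then show ?thesis unfolding C0_def by (simp add: le_max_iff_disj)
  qed
  have "C0 \<le> M"
  proof -
    have "(SUP t\<in>{0..T}. cmod (yd t)) \<le> M / eps\<^sup>2" "(SUP t\<in>{0..T}. cmod (ydd t)) \<le> M / eps ^ 4"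
      "(SUP t\<in>{0..T}. cmod (y t)) \<le> M"
      using bnd T0 by (auto intro!: cSUP_least)
    then show ?thesis
      using \<open>eps > 0\<close> unfolding C0_def by (auto simp: field_simps)
  qed
  from y_C0[OF T0] have "0 \<le> C0" by (rule order.trans[OF norm_ge_zero])
  have gK: "\<bar>gnl lam p \<rho>\<bar> \<le> (SUP \<rho>\<in>{0..(2 * C0 + 4)\<^sup>2}. \<bar>gnl lam p \<rho>\<bar>)"
    if "\<rho> \<in> {0..(2 * C0 + 4)\<^sup>2}" for \<rho>
    using that unfolding gnl_def by (intro le_SUP_continuous_on_Icc continuous_intros)
  define L where "L = \<bar>lam\<bar> * (2 * real p + 1) * (2 * C0 + 4) ^ (2 * p)"
  have "\<bar>energy eps \<alpha> (y (tn + \<tau>) - yt \<tau>) (yd (tn + \<tau>) - ydt \<tau>)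
      - energy eps \<alpha> (y tn - yn) (yd tn - ydn)\<bar>
    \<le> L * \<tau> * exp (L * \<tau>) * energy eps \<alpha> (y tn - yn) (yd tn - ydn)"
    using solves_on_energy_error_step[OF \<open>eps > 0\<close> \<open>\<alpha> \<ge> 0\<close> _ \<open>0 \<le> C0\<close>
        solves_on_shift[OF sol tn] _ solt(1) _ _ gK small] solt tn y_C0 init \<open>0 < \<tau>\<close>
    by (simp add: L_def)
  also have "\<dots> \<le> C * \<tau> * energy eps \<alpha> (y tn - yn) (yd tn - ydn)"
  proof (rule mult_right_mono[OF _ energy_nonneg[OF \<open>\<alpha> \<ge> 0\<close>]])
    have "0 \<le> L" "L \<le> Lm"
      unfolding L_def Lm_def using \<open>0 \<le> C0\<close> \<open>C0 \<le> M\<close> by (auto intro!: mult_left_mono power_mono)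
    moreover have "L * \<tau> \<le> Lm * T"
      using \<open>0 \<le> L\<close> \<open>L \<le> Lm\<close> \<open>0 < \<tau>\<close> tn by (intro mult_mono) auto
    ultimately have "L * \<tau> * exp (L * \<tau>) \<le> Lm * exp (Lm * T) * \<tau>"
      using \<open>0 < \<tau>\<close> mult_mono[of "L * \<tau>" "Lm * \<tau>" "exp (L * \<tau>)" "exp (Lm * T)"]
      by (simp add: mult_right_mono mult.commute mult.left_commute)
    also have "\<dots> \<le> C * \<tau>" using C \<open>0 < \<tau>\<close> by (simp add: mult_right_mono)
    finally show "L * \<tau> * exp (L * \<tau>) \<le> C * \<tau>" .
  qed
  finally show ?thesis unfolding tn_def .
qed

theorem lemmaB3:
  fixes \<alpha> lam T M :: real and p :: nat and \<phi>1 \<phi>2 :: complex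
    and y yd ydd :: "real \<Rightarrow> real \<Rightarrow> complex"
  assumes alpha_nonneg: "\<alpha> \<ge> 0"
    and T_pos: "T > 0"
    and sol: "\<And>eps. 0 < eps \<Longrightarrow> eps \<le> 1 \<Longrightarrow>
                solves_on eps \<alpha> lam p T (y eps) (yd eps) (ydd eps)
                \<and> continuous_on {0..T} (ydd eps)
                \<and> y eps 0 = \<phi>1 \<and> yd eps 0 = \<phi>2 / complex_of_real (eps\<^sup>2)"
    and bnd: "\<And>eps t. 0 < eps \<Longrightarrow> eps \<le> 1 \<Longrightarrow> t \<in> {0..T} \<Longrightarrow>
                cmod (y eps t) \<le> M \<and> cmod (yd eps t) \<le> M / eps\<^sup>2 \<and> cmod (ydd eps t) \<le> M / eps ^ 4"
  shows "\<exists>C>0. \<forall>eps \<tau> (n::nat) yt ydt yddt.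
     let C0 = max (SUP t\<in>{0..T}. cmod (y eps t))
                  (max (eps\<^sup>2 * (SUP t\<in>{0..T}. cmod (yd eps t))) (eps ^ 4 * (SUP t\<in>{0..T}. cmod (ydd eps t))));
         K1 = (SUP \<rho>\<in>{0..(2 * C0 + 4)\<^sup>2}. \<bar>gnl lam p \<rho>\<bar>);
         yn = fst (mti eps \<alpha> lam p \<tau> \<phi>1 \<phi>2 n);
         ydn = snd (mti eps \<alpha> lam p \<tau> \<phi>1 \<phi>2 n);
         tn = real n * \<tau>;
         en = y eps tn - yn;
         den = yd eps tn - ydn;
         eta = y eps (tn + \<tau>) - yt \<tau>;
         deta = yd eps (tn + \<tau>) - ydt \<tau>
     in (0 < eps \<and> eps \<le> 1 \<and> 0 < \<tau> \<and> \<tau> * (2 * C0 + 4) * K1 \<le> 1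
         \<and> real n \<le> T / \<tau> - 1
         \<and> cmod yn \<le> C0 + 1 \<and> cmod ydn \<le> (C0 + 1) / eps\<^sup>2
         \<and> solves_on eps \<alpha> lam p \<tau> yt ydt yddt \<and> yt 0 = yn \<and> ydt 0 = ydn
         \<longrightarrow> \<bar>energy eps \<alpha> eta deta - energy eps \<alpha> en den\<bar> \<le> C * \<tau> * energy eps \<alpha> en den)"
proof -
  define Lm where "Lm = \<bar>lam\<bar> * (2 * real p + 1) * (2 * M + 4) ^ (2 * p)"
  define C where "C = Lm * exp (Lm * T) + 1"
  have "0 < C" unfolding C_def Lm_def by (simp add: add_nonneg_pos)
  have C: "Lm * exp (Lm * T) \<le> C" unfolding C_def by simp
  have solT: "solves_on eps \<alpha> lam p T (y eps) (yd eps) (ydd eps)" if "0 < eps" "eps \<le> 1" for eps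
    using sol[OF that] by blast
  have bndT: "\<forall>t\<in>{0..T}. cmod (y eps t) \<le> M \<and> cmod (yd eps t) \<le> M / eps\<^sup>2 \<and> cmod (ydd eps t) \<le> M / eps ^ 4"
    if "0 < eps" "eps \<le> 1" for eps
    using bnd[OF that] by blast
  show ?thesis
    unfolding Let_def
    by (intro exI[of _ C] conjI \<open>0 < C\<close> allI impI, elim conjE,
        rule one_step_energy_estimate[OF alpha_nonneg _ solT bndT _ _ _ _ _ _ _ _ C[unfolded Lm_def]])
      assumption+
qed

end
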